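(* Let $G$ be the linear quadratic output (LQO) system $\dot x(t)=Ax(t)+Bu(t)$, $y(t)=Cx(t)+\big[x(t)^TM_1x(t),\dots,x(t)^TM_px(t)\big]^T$, with $A\in\mathbb{R}^{n\times n}$ Hurwitz, $B\in\mathbb{R}^{n\times m}$, $C\in\mathbb{R}^{p\times n}$ and symmetric $M_i\in\mathbb{R}^{n\times n}$, and let $\omega>0$. Then $$\|G\|_{\mathcal{H}_{2,\omega}}=\sqrt{\operatorname{trace}(B^TQ_\omega B)},$$ where $Q_\omega$ is the frequency-limited observability Gramian defined in the context.
   Context: The transfer functions of $G$ are $G_1(s)=C(sI-A)^{-1}B$ and $G_{2,i}(s_1,s_2)=B^T(s_1I-A)^{-*}M_i(s_2I-A)^{-1}B$ for $i=1,\dots,p$, where ${}^*$ denotes conjugate transpose and $(\cdot)^{-*}=((\cdot)^{-1})^*$. The frequency-limited $\mathcal{H}_2$ norm on $[0,\omega]$ rad/sec is $$\|G\|_{\mathcal{H}_{2,\omega}}=\Big[\operatorname{trace}\Big(\frac{1}{2\pi}\int_{-\omega}^{\omega}G_1^*(j\nu)G_1(j\nu)\,d\nu+\frac{1}{(2\pi)^2}\int_{-\omega}^{\omega}\int_{-\omega}^{\omega}\sum_{i=1}^pG_{2,i}^*(j\nu_1,j\nu_2)G_{2,i}(j\nu_1,j\nu_2)\,d\nu_1d\nu_2\Big)\Big]^{1/2}.$$ The frequency-limited Gramians are $P_\omega=\frac{1}{2\pi}\int_{-\omega}^{\omega}(j\nu I-A)^{-1}BB^T(j\nu I-A)^{-*}d\nu$,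 $Y_\omega=\frac{1}{2\pi}\int_{-\omega}^{\omega}(j\nu I-A)^{-*}C^TC(j\nu I-A)^{-1}d\nu$, $Z_\omega=\frac{1}{2\pi}\int_{-\omega}^{\omega}(j\nu I-A)^{-*}\big(\sum_{i=1}^pM_iP_\omega M_i\big)(j\nu I-A)^{-1}d\nu$, and $Q_\omega=Y_\omega+Z_\omega$. *)

theory Defs
  imports "HOL-Analysis.Analysis"
begin

definition cmat :: "real^'c^'r \<Rightarrow> complex^'c^'r" where
  "cmat X = (\<chi> i j. complex_of_real (X $ i $ j))"

definition adj :: "complex^'c^'r \<Rightarrow> complex^'r^'c" where
  "adj X = (\<chi> i j. cnj (X $ j $ i))"

definition resolvent :: "complex \<Rightarrow> real^'n^'n \<Rightarrow> complex^'n^'n" where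
  "resolvent s A = matrix_inv (mat s - cmat A)"

definition hurwitz :: "real^'n^'n \<Rightarrow> bool" where
  "hurwitz A \<longleftrightarrow> (\<forall>(ev::complex) (v::complex^'n). v \<noteq> 0 \<and> cmat A *v v = ev *s v \<longrightarrow> Re ev < 0)"

definition G1 :: "real^'n^'n \<Rightarrow> real^'m^'n \<Rightarrow> real^'n^'p \<Rightarrow> complex \<Rightarrow> complex^'m^'p" where
  "G1 A B C s = cmat C ** resolvent s A ** cmat B"

definition G2 :: "real^'n^'n \<Rightarrow> real^'m^'n \<Rightarrow> real^'n^'n \<Rightarrow> complex \<Rightarrow> complex \<Rightarrow> complex^'m^'m" where
  "G2 A B Mi s1 s2 = cmat (transpose B) ** adj (resolvent s1 A) ** cmat Mi ** resolvent s2 A ** cmat B"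

definition H2w_norm :: "real^'n^'n \<Rightarrow> real^'m^'n \<Rightarrow> real^'n^'p \<Rightarrow> ('p \<Rightarrow> real^'n^'n) \<Rightarrow> real \<Rightarrow> real" where
  "H2w_norm A B C M w = sqrt (Re (trace (
      (1 / (2 * pi)) *\<^sub>R
        integral {-w..w} (\<lambda>\<nu>. adj (G1 A B C (\<i> * of_real \<nu>)) ** G1 A B C (\<i> * of_real \<nu>))
    + (1 / (2 * pi)^2) *\<^sub>R
        integral (cbox (-w, -w) (w, w)) (\<lambda>(\<nu>1, \<nu>2).
          \<Sum>i\<in>UNIV. adj (G2 A B (M i) (\<i> * of_real \<nu>1) (\<i> * of_real \<nu>2))
                       ** G2 A B (M i) (\<i> * of_real \<nu>1) (\<i> * of_real \<nu>2)))))"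

definition P_w :: "real^'n^'n \<Rightarrow> real^'m^'n \<Rightarrow> real \<Rightarrow> complex^'n^'n" where
  "P_w A B w = (1 / (2 * pi)) *\<^sub>R integral {-w..w}
     (\<lambda>\<nu>. resolvent (\<i> * of_real \<nu>) A ** cmat (B ** transpose B) ** adj (resolvent (\<i> * of_real \<nu>) A))"

definition Y_w :: "real^'n^'n \<Rightarrow> real^'n^'p \<Rightarrow> real \<Rightarrow> complex^'n^'n" where
  "Y_w A C w = (1 / (2 * pi)) *\<^sub>R integral {-w..w}
     (\<lambda>\<nu>. adj (resolvent (\<i> * of_real \<nu>) A) ** cmat (transpose C ** C) ** resolvent (\<i> * of_real \<nu>) A)"

definition Z_w :: "real^'n^'n \<Rightarrow> real^'m^'n \<Rightarrow> ('p::finite \<Rightarrow> real^'n^'n) \<Rightarrow> real \<Rightarrow> complex^'n^'n" where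
  "Z_w A B M w = (1 / (2 * pi)) *\<^sub>R integral {-w..w}
     (\<lambda>\<nu>. adj (resolvent (\<i> * of_real \<nu>) A)
           ** (\<Sum>i\<in>UNIV. cmat (M i) ** P_w A B w ** cmat (M i))
           ** resolvent (\<i> * of_real \<nu>) A)"

definition Q_w :: "real^'n^'n \<Rightarrow> real^'m^'n \<Rightarrow> real^'n^'p \<Rightarrow> ('p \<Rightarrow> real^'n^'n) \<Rightarrow> real \<Rightarrow> complex^'n^'n" where
  "Q_w A B C M w = Y_w A C w + Z_w A B M w"

end

theory Submission
  imports Defs
begin

text \<open>
Write R(\<nu>) = (j\<nu>I - A)^{-1}; it is continuous in \<nu> because a Hurwitz A has no eigenvalue on the
imaginary axis. Then G1^* G1 = B^T (R^* C^T C R) B and, for symmetric M_i,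
  G_{2,i}^*(j\<nu>1, j\<nu>2) G_{2,i}(j\<nu>1, j\<nu>2) = B^T R(\<nu>2)^* M_i [R(\<nu>1) B B^T R(\<nu>1)^*] M_i R(\<nu>2) B.
The bracket is the integrand of P_\<omega>, so integrating first over \<nu>1 (Fubini for continuous integrands)
turns the double integral into (2\<pi>)^2 B^T Z_\<omega> B, while the single integral is 2\<pi> B^T Y_\<omega> B,
since the constant factors B^T and B commute with integration.
\<close>

lemma cmat_mult: "cmat (X ** Y) = cmat X ** cmat Y"
  by (simp add: cmat_def matrix_matrix_mult_def vec_eq_iff)

lemma adj_mult: "adj (X ** Y) = adj Y ** adj X"
  by (simp add: adj_def matrix_matrix_mult_def vec_eq_iff mult.commute)

lemma adj_cmat: "adj (cmat X) = cmat (transpose X)"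
  by (simp add: adj_def cmat_def transpose_def vec_eq_iff)

lemma adj_adj [simp]: "adj (adj X) = X"
  by (simp add: adj_def vec_eq_iff)

lemma matrix_add_rdistrib: "(A + B) ** C = A ** C + B ** (C :: 'a::semiring_1^'n^'k)"
  by (simp add: matrix_matrix_mult_def vec_eq_iff sum.distrib distrib_right)

lemma matrix_mult_sum_left:
  "finite I \<Longrightarrow> (\<Sum>i\<in>I. f i) ** (X :: 'a::semiring_1^'n^'k) = (\<Sum>i\<in>I. f i ** X)"
  by (induction I rule: finite_induct) (auto simp: matrix_add_rdistrib)

lemma matrix_mult_sum_right:
  "finite I \<Longrightarrow> (X :: 'a::semiring_1^'k^'m) ** (\<Sum>i\<in>I. f i) = (\<Sum>i\<in>I. X ** f i)"
  by (induction I rule: finite_induct) (auto simp: matrix_add_ldistrib)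

lemma bounded_linear_matrix_mult_both:
  "bounded_linear (\<lambda>Z::complex^'k^'n. (X :: complex^'n^'m) ** Z ** (Y :: complex^'l^'k))"
  unfolding linear_conv_bounded_linear[symmetric]
  by (rule linearI)
     (simp_all add: matrix_add_ldistrib matrix_add_rdistrib matrix_scalar_ac scalar_matrix_assoc)

lemma integrable_matrix_mult_both:
  "f integrable_on S \<Longrightarrow> (\<lambda>x. X ** f x ** (Y :: complex^_^_)) integrable_on S"
  using integrable_linear[OF _ bounded_linear_matrix_mult_both] by (simp add: o_def)

lemma integral_matrix_mult_both:
  "f integrable_on S \<Longrightarrow> integral S (\<lambda>x. X ** f x ** Y) = X ** integral S f ** (Y :: complex^_^_)"
  using integral_linear[OF _ bounded_linear_matrix_mult_both] by (simp add: o_def)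

lemma continuous_on_matrix_mult [continuous_intros]:
  fixes f :: "'a::topological_space \<Rightarrow> 'b::real_normed_algebra_1^'n^'m"
  shows "continuous_on S f \<Longrightarrow> continuous_on S g \<Longrightarrow> continuous_on S (\<lambda>x. f x ** g x)"
  unfolding matrix_matrix_mult_def by (intro continuous_intros continuous_on_component)

lemma continuous_on_adj [continuous_intros]:
  "continuous_on S f \<Longrightarrow> continuous_on S (\<lambda>x. adj (f x))"
  unfolding adj_def by (intro continuous_intros continuous_on_component)

lemma continuous_on_det [continuous_intros]:
  fixes f :: "'a::topological_space \<Rightarrow> 'b::real_normed_field^'n^'n"
  shows "continuous_on S f \<Longrightarrow> continuous_on S (\<lambda>x. det (f x))"
  unfolding det_def by (intro continuous_intros continuous_on_component)

lemma matrix_inv_cramer: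
  fixes X :: "'a::field^'n^'n"
  assumes "det X \<noteq> 0"
  shows "matrix_inv X = (\<chi> i k. det (\<chi> a b. if b = i then axis k 1 $ a else X $ a $ b) / det X)"
proof -
  have "X ** matrix_inv X = mat 1"
    using assms unfolding invertible_det_nz[symmetric] invertible_def matrix_inv_def
    by (rule someI2_ex) blast
  then have "X *v (matrix_inv X *v axis k 1) = axis k 1" for k
    by (simp add: matrix_vector_mul_assoc)
  then have "matrix_inv X *v axis k 1
      = (\<chi> i. det (\<chi> a b. if b = i then axis k 1 $ a else X $ a $ b) / det X)" for k
    using cramer[OF assms] by blast
  moreover have "(Y *v axis k 1) $ i = Y $ i $ k" for Y :: "'a^'n^'n" and i k
    by (simp add: matrix_vector_mult_def axis_def if_distrib cong: if_cong)
  ultimately show ?thesis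
    by (simp add: vec_eq_iff)
qed

lemma continuous_on_matrix_inv:
  fixes f :: "'a::topological_space \<Rightarrow> 'b::real_normed_field^'n^'n"
  assumes "continuous_on S f" and "\<And>x. x \<in> S \<Longrightarrow> det (f x) \<noteq> 0"
  shows "continuous_on S (\<lambda>x. matrix_inv (f x))"
proof -
  have entries: "continuous_on S (\<lambda>x. if b = i then axis k 1 $ a else f x $ a $ b)" for a b i k
    by (cases "b = i") (simp_all add: continuous_on_component assms(1))
  have "continuous_on S
      (\<lambda>x. \<chi> i k. det (\<chi> a b. if b = i then axis k 1 $ a else f x $ a $ b) / det (f x))"
    using assms(2)
    by (intro continuous_on_vec_lambda continuous_on_divide continuous_on_det entries assms(1)) auto
  then show ?thesis
    by (rule continuous_on_eq) (simp add: matrix_inv_cramer assms(2))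
qed

lemma hurwitz_det_nonzero:
  assumes "hurwitz A" and "0 \<le> Re s"
  shows "det (mat s - cmat A) \<noteq> 0"
proof
  assume "det (mat s - cmat A) = 0"
  then obtain v where v: "(mat s - cmat A) *v v = 0" "v \<noteq> 0"
    using invertible_det_nz invertible_left_inverse matrix_left_invertible_ker by blast
  have "mat s *v v = s *s v"
    by (simp add: vec_eq_iff matrix_vector_mult_def mat_def if_distrib if_distribR cong: if_cong)
  with v have "cmat A *v v = s *s v"
    by (simp add: matrix_vector_mult_diff_rdistrib)
  with v(2) assms show False
    unfolding hurwitz_def by force
qed

lemma continuous_on_resolvent_imaginary [continuous_intros]:
  assumes "hurwitz A" and "continuous_on S g"
  shows "continuous_on S (\<lambda>x. resolvent (\<i> * of_real (g x)) A)"
  unfolding resolvent_def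
proof (intro continuous_on_matrix_inv)
  have "continuous_on S (\<lambda>x. if i = j then \<i> * of_real (g x) else 0)" for i j :: 'n
    by (cases "i = j") (simp_all add: continuous_intros assms(2))
  then show "continuous_on S (\<lambda>x. mat (\<i> * of_real (g x)) - cmat A)"
    unfolding mat_def by (intro continuous_intros continuous_on_vec_lambda)
qed (simp add: hurwitz_det_nonzero assms(1))

lemma adj_G1_mult_G1:
  "adj (G1 A B C s) ** G1 A B C s
     = cmat (transpose B) ** (adj (resolvent s A) ** cmat (transpose C ** C) ** resolvent s A) ** cmat B"
  by (simp add: G1_def adj_mult adj_cmat cmat_mult matrix_mul_assoc)

lemma adj_G2_mult_G2:
  assumes "transpose Mi = Mi"
  shows "adj (G2 A B Mi s1 s2) ** G2 A B Mi s1 s2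
     = (cmat (transpose B) ** adj (resolvent s2 A) ** cmat Mi)
       ** (resolvent s1 A ** cmat (B ** transpose B) ** adj (resolvent s1 A))
       ** (cmat Mi ** resolvent s2 A ** cmat B)"
  by (simp add: G2_def adj_mult adj_cmat cmat_mult matrix_mul_assoc assms)

lemma integral_adj_G1_mult_G1:
  assumes "hurwitz A"
  shows "(1 / (2 * pi)) *\<^sub>R
           integral {-w..w} (\<lambda>\<nu>. adj (G1 A B C (\<i> * of_real \<nu>)) ** G1 A B C (\<i> * of_real \<nu>))
    = cmat (transpose B) ** Y_w A C w ** cmat B"
proof -
  have "continuous_on {-w..w}
      (\<lambda>\<nu>. adj (resolvent (\<i> * of_real \<nu>) A) ** cmat (transpose C ** C) ** resolvent (\<i> * of_real \<nu>) A)"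
    using assms by (intro continuous_intros)
  then show ?thesis
    by (simp add: adj_G1_mult_G1 Y_w_def integral_matrix_mult_both integrable_continuous_interval
                  matrix_scalar_ac scalar_matrix_assoc[symmetric])
qed

lemma integral_adj_G2_mult_G2_partial:
  fixes M :: "'p::finite \<Rightarrow> real^'n^'n"
  assumes "hurwitz A" and "\<And>i. transpose (M i) = M i"
  shows "integral {-w..w} (\<lambda>\<nu>1. \<Sum>i\<in>UNIV. adj (G2 A B (M i) (\<i> * of_real \<nu>1) (\<i> * of_real \<nu>2))
                                            ** G2 A B (M i) (\<i> * of_real \<nu>1) (\<i> * of_real \<nu>2))
    = (2 * pi) *\<^sub>R (cmat (transpose B)
        ** (adj (resolvent (\<i> * of_real \<nu>2) A) ** (\<Sum>i\<in>UNIV. cmat (M i) ** P_w A B w ** cmat (M i))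
            ** resolvent (\<i> * of_real \<nu>2) A)
        ** cmat B)"
proof -
  define K where
    "K \<nu> = resolvent (\<i> * of_real \<nu>) A ** cmat (B ** transpose B) ** adj (resolvent (\<i> * of_real \<nu>) A)"
    for \<nu> :: real
  have K_integrable: "K integrable_on {-w..w}"
    unfolding K_def using assms(1) by (intro integrable_continuous_interval continuous_intros)
  have "integral {-w..w} (\<lambda>\<nu>1. \<Sum>i\<in>UNIV. adj (G2 A B (M i) (\<i> * of_real \<nu>1) (\<i> * of_real \<nu>2))
                                            ** G2 A B (M i) (\<i> * of_real \<nu>1) (\<i> * of_real \<nu>2))
      = (\<Sum>i\<in>UNIV. (cmat (transpose B) ** adj (resolvent (\<i> * of_real \<nu>2) A) ** cmat (M i))
                    ** integral {-w..w} K ** (cmat (M i) ** resolvent (\<i> * of_real \<nu>2) A ** cmat B))"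
    unfolding adj_G2_mult_G2[OF assms(2)] K_def[symmetric]
    by (subst integral_sum) (simp_all add: K_integrable integrable_matrix_mult_both integral_matrix_mult_both)
  also have "integral {-w..w} K = (2 * pi) *\<^sub>R P_w A B w"
    unfolding P_w_def K_def by simp
  finally show ?thesis
    by (simp add: matrix_mult_sum_left matrix_mult_sum_right matrix_mul_assoc matrix_scalar_ac
                  scalar_matrix_assoc[symmetric] scaleR_sum_right)
qed

lemma integral_adj_G2_mult_G2:
  fixes M :: "'p::finite \<Rightarrow> real^'n^'n"
  assumes "hurwitz A" and "\<And>i. transpose (M i) = M i"
  shows "(1 / (2 * pi)^2) *\<^sub>R integral (cbox (-w, -w) (w, w)) (\<lambda>(\<nu>1, \<nu>2).
           \<Sum>i\<in>UNIV. adj (G2 A B (M i) (\<i> * of_real \<nu>1) (\<i> * of_real \<nu>2))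
                        ** G2 A B (M i) (\<i> * of_real \<nu>1) (\<i> * of_real \<nu>2))
    = cmat (transpose B) ** Z_w A B M w ** cmat B"
proof -
  define H where "H \<nu>1 \<nu>2 = (\<Sum>i\<in>UNIV. adj (G2 A B (M i) (\<i> * of_real \<nu>1) (\<i> * of_real \<nu>2))
                                         ** G2 A B (M i) (\<i> * of_real \<nu>1) (\<i> * of_real \<nu>2))"
    for \<nu>1 \<nu>2 :: real
  define W where
    "W \<nu> = adj (resolvent (\<i> * of_real \<nu>) A) ** (\<Sum>i\<in>UNIV. cmat (M i) ** P_w A B w ** cmat (M i))
            ** resolvent (\<i> * of_real \<nu>) A" for \<nu> :: real
  have H_cont: "continuous_on S (\<lambda>x. H (f x) (g x))"
    if "continuous_on S f" "continuous_on S g" for S and f g :: "real \<times> real \<Rightarrow> real"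
    unfolding H_def adj_G2_mult_G2[OF assms(2)] using assms(1) that by (intro continuous_intros)
  have H_cont_box: "continuous_on (cbox (-w, -w) (w, w)) (\<lambda>(x, y). H x y)"
       "continuous_on (cbox (-w, -w) (w, w)) (\<lambda>(x, y). H y x)"
    using H_cont[OF continuous_on_fst continuous_on_snd, OF continuous_on_id continuous_on_id]
          H_cont[OF continuous_on_snd continuous_on_fst, OF continuous_on_id continuous_on_id]
    by (simp_all add: case_prod_beta')
  then have "integral (cbox (-w, -w) (w, w)) (\<lambda>(\<nu>1, \<nu>2). H \<nu>1 \<nu>2)
      = integral {-w..w} (\<lambda>\<nu>2. integral {-w..w} (\<lambda>\<nu>1. H \<nu>1 \<nu>2))"
    using integral_swap_2dim[OF H_cont_box(1)] integral_prod_continuous[OF H_cont_box(2)] by simp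
  also have "\<dots> = integral {-w..w} (\<lambda>\<nu>2. (2 * pi) *\<^sub>R (cmat (transpose B) ** W \<nu>2 ** cmat B))"
    unfolding H_def W_def by (simp add: integral_adj_G2_mult_G2_partial[where M = M, OF assms])
  also have "\<dots> = (2 * pi) *\<^sub>R (cmat (transpose B) ** integral {-w..w} W ** cmat B)"
    unfolding W_def using assms(1)
    by (simp add: integral_matrix_mult_both integrable_continuous_interval continuous_intros)
  also have "integral {-w..w} W = (2 * pi) *\<^sub>R Z_w A B M w"
    unfolding Z_w_def W_def by simp
  finally show ?thesis
    unfolding H_def by (simp add: matrix_scalar_ac scalar_matrix_assoc[symmetric] power2_eq_square)
qed

theorem proposition1:
  fixes A :: "real^'n^'n" and B :: "real^'m^'n" and C :: "real^'n^'p"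
    and M :: "'p \<Rightarrow> real^'n^'n" and w :: real
  assumes "hurwitz A"
    and "\<And>i. transpose (M i) = M i"
    and "w > 0"
  shows "H2w_norm A B C M w = sqrt (Re (trace (cmat (transpose B) ** Q_w A B C M w ** cmat B)))"
  unfolding H2w_norm_def Q_w_def
    integral_adj_G1_mult_G1[OF assms(1)] integral_adj_G2_mult_G2[OF assms(1,2)]
  by (simp only: matrix_add_ldistrib matrix_add_rdistrib)

end
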